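(* Let $\alpha,\beta\in\mathbb{R}\setminus\mathbb{Q}$, $0<\gamma<1$, $0<\varepsilon<1/2$ and $T>e$, and assume \[ \frac{1}{T^2}m_{\mathbb{R}^2}\left(\left\{(s,t)\in[0,T]^2\ \middle|\ a_{s,t}\tau_{\alpha,\beta}\Gamma\in X_\varepsilon\right\}\right)\geq\gamma, \] where $m_{\mathbb{R}^2}$ is Lebesgue measure on $\mathbb{R}^2$. Then \[ \frac{(\log T)^2}{T^2}\left|\left\{n\in\mathbb{N}\ \middle|\ n<e^{2T},\ n\langle n\alpha\rangle\langle n\beta\rangle\leq\varepsilon^3\right\}\right|\geq\frac{\gamma}{18}. \]
   Context: $\Gamma=\mathrm{SL}(3,\mathbb{Z})$, $X=\mathrm{SL}(3,\mathbb{R})/\Gamma$, where $g\Gamma\in X$ is identified with the unimodular lattice $g\mathbb{Z}^3\subset\mathbb{R}^3$; $\mathrm{SL}(3,\mathbb{R})$ acts on $X$ by left multiplication. For $s,t\in\mathbb{R}$, $a_{s,t}=\mathrm{diag}(e^{-s-t},e^s,e^t)$. $\tau_{\alpha,\beta}$ is the lower triangular unipotent matrix with first column $(1,\alpha,\beta)^t$ and other columns $(0,1,0)^t,(0,0,1)^t$. For $0<\varepsilon<1/2$, $X_\varepsilon=\{x\in X : x\cap \overline{B_\varepsilon}\neq\{0\}\}$, where $B_\varepsilon=\{v\in\mathbb{R}^3: \|v\|_\infty<\varepsilon\}$ and $\|v\|_\infty$ is the maximum of the absolute values of the coordinates. $\langle x\rangle$ denotes the distance from $x\in\mathbb{R}$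 to the nearest integer. *)

theory Defs
  imports "HOL-Analysis.Analysis"
begin

definition dist_int :: "real \<Rightarrow> real" where
  "dist_int x = \<bar>x - of_int (round x)\<bar>"

definition a_mat :: "real \<Rightarrow> real \<Rightarrow> real^3^3" where
  "a_mat s t = (\<chi> i j. if i = j then
      (if i = 1 then exp (- s - t) else if i = 2 then exp s else exp t) else 0)"

definition tau_mat :: "real \<Rightarrow> real \<Rightarrow> real^3^3" where
  "tau_mat \<alpha> \<beta> = (\<chi> i j. if i = j then 1
      else if j = 1 \<and> i = 2 then \<alpha> else if j = 1 \<and> i = 3 then \<beta> else 0)"

text \<open>g \<Gamma> \<in> X_\<epsilon>: the lattice g Z^3 meets the closed sup-norm ball of radius \<epsilon>
  in a nonzero vector.\<close>
definition in_X_eps :: "real \<Rightarrow> real^3^3 \<Rightarrow> bool" where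
  "in_X_eps \<epsilon> g \<longleftrightarrow> (\<exists>v::real^3. (\<forall>i. v $ i \<in> \<int>) \<and> v \<noteq> 0 \<and>
       (\<forall>i. \<bar>(g *v v) $ i\<bar> \<le> \<epsilon>))"

end

theory Submission
  imports Defs
begin

text \<open>
  If the lattice \<open>a\<^sub>s\<^sub>,\<^sub>t \<tau>\<^sub>\<alpha>\<^sub>,\<^sub>\<beta> \<int>\<^sup>3\<close> has a nonzero vector \<open>v\<close> in the \<open>\<epsilon>\<close>-box, then
  \<open>n = |v\<^sub>1|\<close> satisfies \<open>n \<le> \<epsilon> e\<^sup>s\<^sup>+\<^sup>t\<close>, \<open>\<langle>n\<alpha>\<rangle> \<le> \<epsilon> e\<^sup>-\<^sup>s\<close> and \<open>\<langle>n\<beta>\<rangle> \<le> \<epsilon> e\<^sup>-\<^sup>t\<close>.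
  Hence \<open>n\<langle>n\<alpha>\<rangle>\<langle>n\<beta>\<rangle> \<le> \<epsilon>\<^sup>3\<close>, and \<open>(s, t)\<close> lies in the right isosceles triangle
  \<open>s \<le> log (\<epsilon>/\<langle>n\<alpha>\<rangle>)\<close>, \<open>t \<le> log (\<epsilon>/\<langle>n\<beta>\<rangle>)\<close>, \<open>s + t \<ge> log (n/\<epsilon>)\<close> (legs truncated at \<open>T\<close>).
  So the set of visiting times, of measure at least \<open>\<gamma>T\<^sup>2\<close>, is covered by triangles indexed
  by the counted \<open>n\<close>. If all these triangles have legs at most \<open>6 log T\<close>, each has area at most
  \<open>18 (log T)\<^sup>2\<close>, which gives the bound. Otherwise some counted \<open>n\<close> has
  \<open>T\<^sup>6 n < \<epsilon> e\<^sup>2\<^sup>T\<close> and \<open>T\<^sup>6 n\<langle>n\<alpha>\<rangle>\<langle>n\<beta>\<rangle> < \<epsilon>\<^sup>3\<close>, and then all multiples \<open>kn\<close>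
  with \<open>k \<le> T\<^sup>2\<close> are counted as well.
\<close>

definition corner_triangle :: "real \<Rightarrow> real \<Rightarrow> real \<Rightarrow> (real \<times> real) set" where
  "corner_triangle a b c = {p. fst p \<le> a \<and> snd p \<le> b \<and> c \<le> fst p + snd p}"

lemma corner_triangle_in_sets_lborel: "corner_triangle a b c \<in> sets lborel"
proof -
  have "closed (corner_triangle a b c)"
    unfolding corner_triangle_def by (intro closed_Collect_conj closed_Collect_le continuous_intros)
  then show ?thesis by simp
qed

lemma emeasure_corner_triangle:
  assumes "c \<le> a + b"
  shows "emeasure lborel (corner_triangle a b c) = ennreal ((a + b - c)\<^sup>2 / 2)"
proof -
  have "emeasure lborel (corner_triangle a b c) = emeasure (lborel \<Otimes>\<^sub>M lborel) (corner_triangle a b c)"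
    by (simp only: lborel_prod)
  also have "\<dots> = (\<integral>\<^sup>+x. emeasure lborel (Pair x -` corner_triangle a b c) \<partial>lborel)"
    by (rule lborel.emeasure_pair_measure_alt) (simp only: lborel_prod corner_triangle_in_sets_lborel)
  also have "\<dots> = (\<integral>\<^sup>+x. ennreal (x - (c - b)) * indicator {c - b..a} x \<partial>lborel)"
  proof (rule nn_integral_cong)
    fix x :: real
    have "Pair x -` corner_triangle a b c = (if x \<le> a then {c - x..b} else {})"
      unfolding corner_triangle_def by auto
    then show "emeasure lborel (Pair x -` corner_triangle a b c)
        = ennreal (x - (c - b)) * indicator {c - b..a} x"
      by (auto simp: indicator_def)
  qed
  also have "\<dots> = ennreal ((a - (c - b))\<^sup>2 / 2 - (c - b - (c - b))\<^sup>2 / 2)"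
    using assms by (intro nn_integral_FTC_Icc) (auto intro!: derivative_eq_intros)
  finally show ?thesis by (simp add: algebra_simps)
qed

lemma fmeasurable_corner_triangle: "corner_triangle a b c \<in> fmeasurable lborel"
  and measure_corner_triangle: "measure lborel (corner_triangle a b c) = (max 0 (a + b - c))\<^sup>2 / 2"
proof -
  have "corner_triangle a b c \<in> fmeasurable lborel
      \<and> measure lborel (corner_triangle a b c) = (max 0 (a + b - c))\<^sup>2 / 2"
  proof (cases "c \<le> a + b")
    case True
    then show ?thesis
      using emeasure_corner_triangle[OF True] corner_triangle_in_sets_lborel
      by (simp add: fmeasurable_def measure_def)
  next
    case False
    then have "corner_triangle a b c = {}" unfolding corner_triangle_def by auto
    with False show ?thesis by simp
  qed
  then show "corner_triangle a b c \<in> fmeasurable lborel"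
    and "measure lborel (corner_triangle a b c) = (max 0 (a + b - c))\<^sup>2 / 2" by auto
qed

lemma measure_le_card_if_covered_by_corner_triangles:
  assumes "finite I" "S \<in> sets lborel" "S \<subseteq> (\<Union>i\<in>I. corner_triangle (a i) (b i) (c i))"
    and "\<And>i. i \<in> I \<Longrightarrow> a i + b i - c i \<le> w" "0 \<le> w"
  shows "measure lborel S \<le> real (card I) * (w\<^sup>2 / 2)"
proof -
  have "measure lborel S \<le> measure lborel (\<Union>i\<in>I. corner_triangle (a i) (b i) (c i))"
    using assms(1-3) by (intro measure_mono_fmeasurable) (auto intro: fmeasurable_corner_triangle)
  also have "\<dots> \<le> (\<Sum>i\<in>I. measure lborel (corner_triangle (a i) (b i) (c i)))"
    by (rule measure_UNION_le[OF assms(1)]) (rule fmeasurableD[OF fmeasurable_corner_triangle])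
  also have "\<dots> \<le> (\<Sum>i\<in>I. w\<^sup>2 / 2)"
    using assms(4,5) by (intro sum_mono) (auto simp: measure_corner_triangle intro!: power_mono)
  finally show ?thesis by simp
qed

lemma dist_int_le: "dist_int x \<le> \<bar>x - of_int m\<bar>"
  unfolding dist_int_def by (rule round_diff_minimal)

lemma dist_int_nonneg: "0 \<le> dist_int x"
  unfolding dist_int_def by simp

lemma dist_int_minus [simp]: "dist_int (- x) = dist_int x"
proof -
  have "dist_int (- y) \<le> dist_int y" for y
    using dist_int_le[of "- y" "- round y"] by (simp add: dist_int_def abs_minus_commute)
  from this[of x] this[of "- x"] show ?thesis by simp
qed

lemma dist_int_of_nat_mult_le: "dist_int (real k * x) \<le> real k * dist_int x"
proof -
  have "dist_int (real k * x) \<le> \<bar>real k * x - of_int (int k * round x)\<bar>" by (rule dist_int_le)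
  also have "\<dots> = \<bar>real k * (x - of_int (round x))\<bar>" by (simp add: algebra_simps)
  also have "\<dots> = real k * dist_int x" by (simp add: dist_int_def abs_mult)
  finally show ?thesis .
qed

lemma dist_int_pos_if_irrational:
  assumes "\<alpha> \<notin> \<rat>" "1 \<le> n"
  shows "0 < dist_int (real n * \<alpha>)"
proof (rule ccontr)
  assume "\<not> 0 < dist_int (real n * \<alpha>)"
  then have "\<alpha> = of_int (round (real n * \<alpha>)) / real n"
    using assms(2) by (simp add: dist_int_def field_simps)
  then have "\<alpha> \<in> \<rat>" by (metis Rats_divide Rats_of_int Rats_of_nat)
  with assms(1) show False by simp
qed

lemma dist_int_nat_abs_mult_le: "dist_int (real (nat \<bar>p\<bar>) * x) \<le> \<bar>of_int p * x + of_int m\<bar>"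
proof -
  have "dist_int (real (nat \<bar>p\<bar>) * x) = dist_int (of_int p * x)"
    by (cases "p \<ge> 0") simp_all
  also have "\<dots> \<le> \<bar>of_int p * x + of_int m\<bar>"
    using dist_int_le[of _ "- m"] by simp
  finally show ?thesis .
qed

lemma a_tau_mult_vec:
  fixes v :: "real^3"
  shows "((a_mat s t ** tau_mat \<alpha> \<beta>) *v v) $ 1 = exp (- s - t) * v$1"
    and "((a_mat s t ** tau_mat \<alpha> \<beta>) *v v) $ 2 = exp s * (\<alpha> * v$1 + v$2)"
    and "((a_mat s t ** tau_mat \<alpha> \<beta>) *v v) $ 3 = exp t * (\<beta> * v$1 + v$3)"
  unfolding matrix_vector_mul_assoc[symmetric]
  by (simp_all add: matrix_vector_mult_def sum_3
      a_mat_def tau_mat_def algebra_simps)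

lemma abs_le_exp_minus_if_abs_mult_exp_le:
  fixes u x \<epsilon> :: real
  assumes "\<bar>exp u * x\<bar> \<le> \<epsilon>"
  shows "\<bar>x\<bar> \<le> \<epsilon> * exp (- u)"
  using assms by (simp add: abs_mult exp_minus field_simps)

lemma a_tau_short_vector_imp_approximation:
  assumes "in_X_eps \<epsilon> (a_mat s t ** tau_mat \<alpha> \<beta>)" "0 \<le> s" "0 \<le> t" "\<epsilon> < 1"
  obtains n :: nat where "1 \<le> n" "real n \<le> \<epsilon> * exp (s + t)"
    "dist_int (real n * \<alpha>) \<le> \<epsilon> * exp (- s)" "dist_int (real n * \<beta>) \<le> \<epsilon> * exp (- t)"
proof -
  obtain v :: "real^3" where v_int: "\<And>i. v $ i \<in> \<int>" and "v \<noteq> 0"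
    and v_short: "\<And>i. \<bar>((a_mat s t ** tau_mat \<alpha> \<beta>) *v v) $ i\<bar> \<le> \<epsilon>"
    using assms(1) unfolding in_X_eps_def by blast
  obtain p q r where pqr: "v $ 1 = of_int p" "v $ 2 = of_int q" "v $ 3 = of_int r"
    using v_int by (metis Ints_cases)
  have p_bound: "\<bar>of_int p\<bar> \<le> \<epsilon> * exp (s + t)"
    using abs_le_exp_minus_if_abs_mult_exp_le[of "- s - t" "of_int p" \<epsilon>] v_short[of 1]
    by (simp add: a_tau_mult_vec pqr add.commute)
  have q_bound: "\<bar>of_int p * \<alpha> + of_int q\<bar> \<le> \<epsilon> * exp (- s)"
    using abs_le_exp_minus_if_abs_mult_exp_le[of s] v_short[of 2]
    by (simp add: a_tau_mult_vec pqr mult.commute)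
  have r_bound: "\<bar>of_int p * \<beta> + of_int r\<bar> \<le> \<epsilon> * exp (- t)"
    using abs_le_exp_minus_if_abs_mult_exp_le[of t] v_short[of 3]
    by (simp add: a_tau_mult_vec pqr mult.commute)
  have "0 \<le> \<epsilon>" using v_short[of 1] abs_ge_zero order_trans by blast
  have "p \<noteq> 0"
  proof
    assume "p = 0"
    have "\<epsilon> * exp (- u) < 1" if "0 \<le> u" for u
      using that assms(4) \<open>0 \<le> \<epsilon>\<close> mult_left_le_one_le[of \<epsilon> "exp (- u)"] by (simp add: mult.commute)
    then have "\<bar>of_int q\<bar> < (1::real)" "\<bar>of_int r\<bar> < (1::real)"
      using q_bound r_bound \<open>p = 0\<close> assms(2,3) by fastforce+
    then have "v $ i = 0" for i
      using exhaust_3[of i] pqr \<open>p = 0\<close> by auto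
    with \<open>v \<noteq> 0\<close> show False by (simp add: vec_eq_iff)
  qed
  show thesis
  proof
    show "1 \<le> nat \<bar>p\<bar>" using \<open>p \<noteq> 0\<close> by simp
    show "real (nat \<bar>p\<bar>) \<le> \<epsilon> * exp (s + t)" using p_bound by simp
    show "dist_int (real (nat \<bar>p\<bar>) * \<alpha>) \<le> \<epsilon> * exp (- s)"
      using dist_int_nat_abs_mult_le[of p \<alpha> q] q_bound by linarith
    show "dist_int (real (nat \<bar>p\<bar>) * \<beta>) \<le> \<epsilon> * exp (- t)"
      using dist_int_nat_abs_mult_le[of p \<beta> r] r_bound by linarith
  qed
qed

definition littlewood_set :: "real \<Rightarrow> real \<Rightarrow> real \<Rightarrow> real \<Rightarrow> nat set" where
  "littlewood_set \<alpha> \<beta> X \<delta> = {n. 1 \<le> n \<and> real n < X \<and>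
     real n * dist_int (real n * \<alpha>) * dist_int (real n * \<beta>) \<le> \<delta>}"

definition visit_times :: "real \<Rightarrow> real \<Rightarrow> real \<Rightarrow> real \<Rightarrow> (real \<times> real) set" where
  "visit_times \<alpha> \<beta> \<epsilon> T = {p. case p of (s, t) \<Rightarrow> s \<in> {0..T} \<and> t \<in> {0..T} \<and>
     in_X_eps \<epsilon> (a_mat s t ** tau_mat \<alpha> \<beta>)}"

lemma finite_littlewood_set: "finite (littlewood_set \<alpha> \<beta> X \<delta>)"
proof (rule finite_subset)
  have "n < nat \<lceil>X\<rceil>" if "real n < X" for n
    using that by (simp add: less_ceiling_iff zless_nat_eq_int_zless)
  then show "littlewood_set \<alpha> \<beta> X \<delta> \<subseteq> {..< nat \<lceil>X\<rceil>}"
    by (auto simp: littlewood_set_def)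
qed simp

lemma card_littlewood_set_ge_multiples:
  assumes "1 \<le> n" "real K * real n < X"
    and "real K ^ 3 * (real n * dist_int (real n * \<alpha>) * dist_int (real n * \<beta>)) \<le> \<delta>"
  shows "K \<le> card (littlewood_set \<alpha> \<beta> X \<delta>)"
proof -
  have "(\<lambda>k. k * n) ` {1..K} \<subseteq> littlewood_set \<alpha> \<beta> X \<delta>"
  proof (safe intro!: image_eqI)
    fix k assume k: "k \<in> {1..K}"
    let ?d = "real n * dist_int (real n * \<alpha>) * dist_int (real n * \<beta>)"
    have "0 \<le> ?d" by (simp add: dist_int_nonneg)
    have "real (k * n) \<le> real K * real n" using k by (simp add: mult_right_mono)
    with assms(2) have "real (k * n) < X" by simp
    have "real (k * n) * dist_int (real (k * n) * \<alpha>) * dist_int (real (k * n) * \<beta>)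
        \<le> real (k * n) * (real k * dist_int (real n * \<alpha>)) * (real k * dist_int (real n * \<beta>))"
      using dist_int_of_nat_mult_le[of k "real n * _"]
      by (intro mult_mono mult_nonneg_nonneg dist_int_nonneg) (simp_all add: mult.assoc)
    also have "\<dots> = real k ^ 3 * ?d" by (simp add: power3_eq_cube)
    also have "\<dots> \<le> real K ^ 3 * ?d"
      using k \<open>0 \<le> ?d\<close> by (intro mult_right_mono power_mono) auto
    also have "\<dots> \<le> \<delta>" by (rule assms(3))
    finally show "k * n \<in> littlewood_set \<alpha> \<beta> X \<delta>"
      using k assms(1) \<open>real (k * n) < X\<close> unfolding littlewood_set_def by simp
  qed
  moreover have "card ((\<lambda>k. k * n) ` {1..K}) = K"
    using assms(1) by (subst card_image) (auto simp: inj_on_def)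
  ultimately show ?thesis
    using card_mono[OF finite_littlewood_set] by metis
qed

lemma le_ln_div_iff:
  fixes d \<epsilon> s :: real
  assumes "0 < d" "0 < \<epsilon>"
  shows "s \<le> ln (\<epsilon> / d) \<longleftrightarrow> d \<le> \<epsilon> * exp (- s)"
  using assms by (simp add: ln_ge_iff exp_minus field_simps)

lemma ln_div_le_iff:
  fixes x \<epsilon> u :: real
  assumes "0 < x" "0 < \<epsilon>"
  shows "ln (x / \<epsilon>) \<le> u \<longleftrightarrow> x \<le> \<epsilon> * exp u"
proof -
  have "ln (x / \<epsilon>) \<le> u \<longleftrightarrow> x / \<epsilon> \<le> exp u"
    using assms by (metis divide_pos_pos exp_gt_zero ln_exp ln_le_cancel_iff)
  with assms show ?thesis by (simp add: field_simps)
qed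

lemma visit_times_subset_UN_corner_triangle:
  assumes "\<alpha> \<notin> \<rat>" "\<beta> \<notin> \<rat>" "0 < \<epsilon>" "\<epsilon> < 1"
  shows "visit_times \<alpha> \<beta> \<epsilon> T \<subseteq> (\<Union>n \<in> littlewood_set \<alpha> \<beta> (exp (2 * T)) (\<epsilon> ^ 3).
           corner_triangle (min (ln (\<epsilon> / dist_int (real n * \<alpha>))) T)
             (min (ln (\<epsilon> / dist_int (real n * \<beta>))) T) (ln (real n / \<epsilon>)))"
proof clarify
  fix s t assume "(s, t) \<in> visit_times \<alpha> \<beta> \<epsilon> T"
  then have st: "0 \<le> s" "s \<le> T" "0 \<le> t" "t \<le> T"
    and short: "in_X_eps \<epsilon> (a_mat s t ** tau_mat \<alpha> \<beta>)"
    unfolding visit_times_def by auto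
  obtain n where n: "1 \<le> n" "real n \<le> \<epsilon> * exp (s + t)"
    and n_\<alpha>: "dist_int (real n * \<alpha>) \<le> \<epsilon> * exp (- s)"
    and n_\<beta>: "dist_int (real n * \<beta>) \<le> \<epsilon> * exp (- t)"
    using a_tau_short_vector_imp_approximation[OF short st(1,3) assms(4)] by blast
  \<comment> \<open>Irrationality is what keeps \<open>ln (\<epsilon> / dist_int \<dots>)\<close> away from the junk value \<open>ln 0 = 0\<close>.\<close>
  have pos: "0 < dist_int (real n * \<alpha>)" "0 < dist_int (real n * \<beta>)"
    using dist_int_pos_if_irrational assms(1,2) n(1) by auto
  have "real n < exp (2 * T)"
  proof -
    have "\<epsilon> * exp (s + t) < exp (s + t)" using assms(4) by simp
    also have "\<dots> \<le> exp (2 * T)" using st by simp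
    finally show ?thesis using n(2) by linarith
  qed
  moreover have "real n * dist_int (real n * \<alpha>) * dist_int (real n * \<beta>)
      \<le> (\<epsilon> * exp (s + t)) * (\<epsilon> * exp (- s)) * (\<epsilon> * exp (- t))"
    using n n_\<alpha> n_\<beta> assms(3) by (intro mult_mono mult_nonneg_nonneg dist_int_nonneg) auto
  moreover have "(\<epsilon> * exp (s + t)) * (\<epsilon> * exp (- s)) * (\<epsilon> * exp (- t)) = \<epsilon> ^ 3"
    by (simp add: exp_add exp_minus power3_eq_cube field_simps)
  ultimately have "n \<in> littlewood_set \<alpha> \<beta> (exp (2 * T)) (\<epsilon> ^ 3)"
    using n(1) unfolding littlewood_set_def by simp
  moreover have "(s, t) \<in> corner_triangle (min (ln (\<epsilon> / dist_int (real n * \<alpha>))) T)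
      (min (ln (\<epsilon> / dist_int (real n * \<beta>))) T) (ln (real n / \<epsilon>))"
    using st n n_\<alpha> n_\<beta> pos assms(3)
    by (simp add: corner_triangle_def le_ln_div_iff ln_div_le_iff)
  ultimately show "(s, t) \<in> (\<Union>n \<in> littlewood_set \<alpha> \<beta> (exp (2 * T)) (\<epsilon> ^ 3).
      corner_triangle (min (ln (\<epsilon> / dist_int (real n * \<alpha>))) T)
        (min (ln (\<epsilon> / dist_int (real n * \<beta>))) T) (ln (real n / \<epsilon>)))"
    by blast
qed

lemma wide_corner_triangle_bounds:
  fixes d\<^sub>1 d\<^sub>2 x \<epsilon> T L :: real
  assumes "0 < d\<^sub>1" "0 < d\<^sub>2" "0 < x" "0 < \<epsilon>"
    and "L < min (ln (\<epsilon> / d\<^sub>1)) T + min (ln (\<epsilon> / d\<^sub>2)) T - ln (x / \<epsilon>)"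
  shows "exp L * x < \<epsilon> * exp (2 * T)" and "exp L * (x * d\<^sub>1 * d\<^sub>2) < \<epsilon> ^ 3"
proof -
  define P where "P = min (\<epsilon> / d\<^sub>1) (exp T)"
  define Q where "Q = min (\<epsilon> / d\<^sub>2) (exp T)"
  have "exp L < exp (min (ln (\<epsilon> / d\<^sub>1)) T + min (ln (\<epsilon> / d\<^sub>2)) T - ln (x / \<epsilon>))"
    using assms(5) by simp
  also have "\<dots> = P * Q * \<epsilon> / x"
  proof -
    have "exp (min a b) = min (exp a) (exp b)" for a b :: real by (simp add: min_def)
    with assms(1-4) show ?thesis by (simp add: P_def Q_def exp_add exp_diff)
  qed
  finally have PQ: "exp L * x < P * Q * \<epsilon>"
    using assms(3) by (simp add: pos_less_divide_eq)
  have "P * Q * \<epsilon> \<le> exp T * exp T * \<epsilon>"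
    unfolding P_def Q_def by (intro mult_mono mult_right_mono) (use assms in auto)
  moreover have "exp T * exp T = exp (2 * T)" by (simp flip: exp_add)
  ultimately show "exp L * x < \<epsilon> * exp (2 * T)"
    using PQ by (simp add: mult.commute)
  have "P * Q * \<epsilon> \<le> (\<epsilon> / d\<^sub>1) * (\<epsilon> / d\<^sub>2) * \<epsilon>"
    unfolding P_def Q_def by (intro mult_mono mult_right_mono) (use assms in auto)
  with PQ have "exp L * x < (\<epsilon> / d\<^sub>1) * (\<epsilon> / d\<^sub>2) * \<epsilon>" by linarith
  then have "exp L * x * (d\<^sub>1 * d\<^sub>2) < (\<epsilon> / d\<^sub>1) * (\<epsilon> / d\<^sub>2) * \<epsilon> * (d\<^sub>1 * d\<^sub>2)"
    using assms(1,2) by (intro mult_strict_right_mono) auto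
  also have "\<dots> = \<epsilon> ^ 3"
    using assms(1,2) by (simp add: field_simps power3_eq_cube)
  finally show "exp L * (x * d\<^sub>1 * d\<^sub>2) < \<epsilon> ^ 3" by (simp add: mult_ac)
qed

lemma card_littlewood_set_ge_if_wide:
  assumes "1 \<le> n" "0 < dist_int (real n * \<alpha>)" "0 < dist_int (real n * \<beta>)"
    and "0 < \<epsilon>" "\<epsilon> < 1" "1 \<le> T"
    and "6 * ln T < min (ln (\<epsilon> / dist_int (real n * \<alpha>))) T
                    + min (ln (\<epsilon> / dist_int (real n * \<beta>))) T - ln (real n / \<epsilon>)"
  shows "T\<^sup>2 - 1 \<le> real (card (littlewood_set \<alpha> \<beta> (exp (2 * T)) (\<epsilon> ^ 3)))"
proof -
  let ?d = "real n * dist_int (real n * \<alpha>) * dist_int (real n * \<beta>)"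
  define K where "K = nat \<lfloor>T\<^sup>2\<rfloor>"
  have "real K = of_int \<lfloor>T\<^sup>2\<rfloor>" unfolding K_def by simp
  then have K: "real K \<le> T\<^sup>2" "T\<^sup>2 - 1 \<le> real K"
    using floor_correct[of "T\<^sup>2"] by simp_all
  have "exp (6 * ln T) = exp (ln (T ^ 6))" using assms(6) by (simp add: ln_realpow)
  also have "\<dots> = T ^ 6" using assms(6) by simp
  finally have wide: "T ^ 6 * real n < \<epsilon> * exp (2 * T)" "T ^ 6 * ?d < \<epsilon> ^ 3"
    using wide_corner_triangle_bounds[OF assms(2,3) _ assms(4,7)] assms(1) by (simp_all add: mult_ac)
  have "real K \<le> T ^ 6"
    using K(1) power_increasing[of 2 6 T] assms(6) by linarith
  then have "real K * real n \<le> T ^ 6 * real n" by (simp add: mult_right_mono)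
  also have "\<dots> < exp (2 * T)"
    using wide(1) assms(5) mult_strict_right_mono[of \<epsilon> 1 "exp (2 * T)"] exp_gt_zero[of "2 * T"]
    by linarith
  finally have "real K * real n < exp (2 * T)" .
  moreover have "real K ^ 3 * ?d \<le> \<epsilon> ^ 3"
  proof -
    have "real K ^ 3 \<le> (T\<^sup>2) ^ 3" using K(1) by (intro power_mono) auto
    then have "real K ^ 3 * ?d \<le> T ^ 6 * ?d"
      by (intro mult_right_mono) (simp_all add: dist_int_nonneg flip: power_mult)
    with wide(2) show ?thesis by linarith
  qed
  ultimately have "K \<le> card (littlewood_set \<alpha> \<beta> (exp (2 * T)) (\<epsilon> ^ 3))"
    using card_littlewood_set_ge_multiples assms(1) by blast
  with K(2) show ?thesis by linarith
qed

lemma littlewood_set_large_or_visit_times_small: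
  assumes "\<alpha> \<notin> \<rat>" "\<beta> \<notin> \<rat>" "0 < \<epsilon>" "\<epsilon> < 1" "1 \<le> T"
  defines "N \<equiv> littlewood_set \<alpha> \<beta> (exp (2 * T)) (\<epsilon> ^ 3)"
  shows "T\<^sup>2 - 1 \<le> real (card N)
    \<or> measure lborel (visit_times \<alpha> \<beta> \<epsilon> T) \<le> 18 * (ln T)\<^sup>2 * real (card N)"
proof -
  define a where "a n = min (ln (\<epsilon> / dist_int (real n * \<alpha>))) T" for n :: nat
  define b where "b n = min (ln (\<epsilon> / dist_int (real n * \<beta>))) T" for n :: nat
  define c where "c n = ln (real n / \<epsilon>)" for n :: nat
  show ?thesis
  proof (cases "\<exists>n\<in>N. 6 * ln T < a n + b n - c n")
    case True
    then obtain n where "n \<in> N" "6 * ln T < a n + b n - c n" by blast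
    then have "T\<^sup>2 - 1 \<le> real (card N)"
      unfolding N_def a_def b_def c_def using assms(1-5)
      by (intro card_littlewood_set_ge_if_wide)
        (auto simp: littlewood_set_def intro: dist_int_pos_if_irrational)
    then show ?thesis ..
  next
    case False
    show ?thesis
    proof (cases "visit_times \<alpha> \<beta> \<epsilon> T \<in> sets lborel")
      case True
      have "visit_times \<alpha> \<beta> \<epsilon> T \<subseteq> (\<Union>n\<in>N. corner_triangle (a n) (b n) (c n))"
        unfolding N_def a_def b_def c_def using assms(1-4)
        by (rule visit_times_subset_UN_corner_triangle)
      then have "measure lborel (visit_times \<alpha> \<beta> \<epsilon> T) \<le> real (card N) * ((6 * ln T)\<^sup>2 / 2)"
        using True False assms(5) by (intro measure_le_card_if_covered_by_corner_triangles)
          (auto simp: N_def finite_littlewood_set)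
      then show ?thesis by (simp add: power_mult_distrib mult_ac)
    next
      case False
      \<comment> \<open>\<open>measure\<close> assigns 0 to non-measurable sets.\<close>
      then show ?thesis by (simp add: measure_notin_sets)
    qed
  qed
qed

theorem theorem3p1:
  fixes \<alpha> \<beta> \<gamma> \<epsilon> T :: real
  assumes "\<alpha> \<notin> \<rat>" and "\<beta> \<notin> \<rat>"
    and "0 < \<gamma>" and "\<gamma> < 1"
    and "0 < \<epsilon>" and "\<epsilon> < 1/2"
    and "T > exp 1"
    and "measure lborel {p :: real \<times> real. case p of (s, t) \<Rightarrow> s \<in> {0..T} \<and> t \<in> {0..T} \<and>
            in_X_eps \<epsilon> (a_mat s t ** tau_mat \<alpha> \<beta>)} / T\<^sup>2 \<ge> \<gamma>"
  shows "(ln T)\<^sup>2 / T\<^sup>2 * real (card {n :: nat. 1 \<le> n \<and> real n < exp (2 * T) \<and>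
            real n * dist_int (real n * \<alpha>) * dist_int (real n * \<beta>) \<le> \<epsilon> ^ 3})
         \<ge> \<gamma> / 18"
proof -
  let ?N = "littlewood_set \<alpha> \<beta> (exp (2 * T)) (\<epsilon> ^ 3)"
  have "2 \<le> exp (1::real)" using exp_ge_add_one_self[of 1] by simp
  then have T: "2 < T" "1 < ln T"
    using assms(7) ln_less_cancel_iff[of "exp 1" T] by auto
  have visits: "\<gamma> * T\<^sup>2 \<le> measure lborel (visit_times \<alpha> \<beta> \<epsilon> T)"
    using assms(8) T(1) by (simp add: visit_times_def pos_le_divide_eq)
  have "\<epsilon> < 1" "1 \<le> T" using assms(6) T(1) by auto
  from littlewood_set_large_or_visit_times_small[OF assms(1,2,5) this]
  have "\<gamma> * T\<^sup>2 \<le> 18 * (ln T)\<^sup>2 * real (card ?N)"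
  proof (elim disjE)
    assume "T\<^sup>2 - 1 \<le> real (card ?N)"
    moreover have "real (card ?N) \<le> (ln T)\<^sup>2 * real (card ?N)"
      using mult_right_mono[of 1 "(ln T)\<^sup>2" "real (card ?N)"] one_le_power[of "ln T" 2] T(2)
      by simp
    moreover have "\<gamma> * T\<^sup>2 \<le> T\<^sup>2" using mult_right_mono[of \<gamma> 1 "T\<^sup>2"] assms(4) by simp
    moreover have "4 < T\<^sup>2" using power_strict_mono[of 2 T 2] T(1) by simp
    ultimately show ?thesis by linarith
  qed (use visits in auto)
  then show ?thesis
    using T(1) by (simp add: littlewood_set_def field_simps)
qed

end
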